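(* Let $A$ be a commutative Noetherian ring of Krull dimension $d\geq 1$ and let $s$ be a non-zero-divisor of $A$. Then the generalized dimension of the localization $A_{1+sA}$ is $\leq d-1$.
   Context: Let $B$ be a commutative ring. For a function $\delta:\mathrm{Spec}(B)\to\mathbb{N}\cup\{0\}$, define a partial order on $\mathrm{Spec}(B)$ by $\mathfrak p\ll\mathfrak q$ if $\mathfrak p\subset\mathfrak q$ and $\delta(\mathfrak p)>\delta(\mathfrak q)$. Such a $\delta$ is a generalized dimension function if for every ideal $J$ of $B$, the set $V(J)$ has only finitely many minimal elements with respect to $\ll$. The generalized dimension of $B$ is the minimum, over all generalized dimension functions $\delta$ on $\mathrm{Spec}(B)$, of $\max_{\mathfrak p\in\mathrm{Spec}(B)}\delta(\mathfrak p)$. Here $A_{1+sA}$ denotes the localization of $A$ at the multiplicative set $1+sA$. *)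

theory Defs
  imports "HOL-Algebra.Algebra" "HOL-Library.Extended_Nat"
begin

definition Spec :: "('a, 'm) ring_scheme \<Rightarrow> 'a set set" where
  "Spec R = {P. primeideal P R}"

definition V_set :: "('a, 'm) ring_scheme \<Rightarrow> 'a set \<Rightarrow> 'a set set" where
  "V_set R J = {P \<in> Spec R. J \<subseteq> P}"

definition krull_dim :: "('a, 'm) ring_scheme \<Rightarrow> enat" where
  "krull_dim R = (SUP n \<in> {n. \<exists>c :: nat \<Rightarrow> 'a set.
       (\<forall>i\<le>n. c i \<in> Spec R) \<and> (\<forall>i<n. c i \<subset> c (Suc i))}. enat n)"

definition non_zero_divisor :: "('a, 'm) ring_scheme \<Rightarrow> 'a \<Rightarrow> bool" where
  "non_zero_divisor R s \<longleftrightarrow> s \<in> carrier R \<and>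
     (\<forall>a \<in> carrier R. s \<otimes>\<^bsub>R\<^esub> a = \<zero>\<^bsub>R\<^esub> \<longrightarrow> a = \<zero>\<^bsub>R\<^esub>)"

definition loc_rel :: "('a, 'm) ring_scheme \<Rightarrow> 'a set \<Rightarrow> (('a \<times> 'a) \<times> ('a \<times> 'a)) set" where
  "loc_rel R S = {((a, u), (b, v)). a \<in> carrier R \<and> u \<in> S \<and> b \<in> carrier R \<and> v \<in> S \<and>
      (\<exists>t \<in> S. t \<otimes>\<^bsub>R\<^esub> ((a \<otimes>\<^bsub>R\<^esub> v) \<ominus>\<^bsub>R\<^esub> (b \<otimes>\<^bsub>R\<^esub> u)) = \<zero>\<^bsub>R\<^esub>)}"

text \<open>Elements are equivalence classes of fractions a/u; operations are computed on
  (arbitrarily chosen) representatives.\<close>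
definition loc_mult :: "('a, 'm) ring_scheme \<Rightarrow> 'a set \<Rightarrow> ('a \<times> 'a) set \<Rightarrow> ('a \<times> 'a) set \<Rightarrow> ('a \<times> 'a) set" where
  "loc_mult R S U W = (let p = (SOME p. p \<in> U); q = (SOME q. q \<in> W) in
         loc_rel R S `` {(fst p \<otimes>\<^bsub>R\<^esub> fst q, snd p \<otimes>\<^bsub>R\<^esub> snd q)})"

definition loc_add :: "('a, 'm) ring_scheme \<Rightarrow> 'a set \<Rightarrow> ('a \<times> 'a) set \<Rightarrow> ('a \<times> 'a) set \<Rightarrow> ('a \<times> 'a) set" where
  "loc_add R S U W = (let p = (SOME p. p \<in> U); q = (SOME q. q \<in> W) in
         loc_rel R S `` {((fst p \<otimes>\<^bsub>R\<^esub> snd q) \<oplus>\<^bsub>R\<^esub> (fst q \<otimes>\<^bsub>R\<^esub> snd p),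
                          snd p \<otimes>\<^bsub>R\<^esub> snd q)})"

definition localization :: "('a, 'm) ring_scheme \<Rightarrow> 'a set \<Rightarrow> ('a \<times> 'a) set ring" where
  "localization R S =
    \<lparr>carrier = (carrier R \<times> S) // loc_rel R S,
     monoid.mult = loc_mult R S,
     one = loc_rel R S `` {(\<one>\<^bsub>R\<^esub>, \<one>\<^bsub>R\<^esub>)},
     ring.zero = loc_rel R S `` {(\<zero>\<^bsub>R\<^esub>, \<one>\<^bsub>R\<^esub>)},
     ring.add = loc_add R S\<rparr>"

definition one_plus :: "('a, 'm) ring_scheme \<Rightarrow> 'a \<Rightarrow> 'a set" where
  "one_plus R s = {\<one>\<^bsub>R\<^esub> \<oplus>\<^bsub>R\<^esub> (s \<otimes>\<^bsub>R\<^esub> a) | a. a \<in> carrier R}"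

definition gd_less :: "('b set \<Rightarrow> nat) \<Rightarrow> 'b set \<Rightarrow> 'b set \<Rightarrow> bool" where
  "gd_less \<delta> p q \<longleftrightarrow> p \<subset> q \<and> \<delta> p > \<delta> q"

definition gd_minimal :: "('b set \<Rightarrow> nat) \<Rightarrow> 'b set set \<Rightarrow> 'b set set" where
  "gd_minimal \<delta> U = {p \<in> U. \<not> (\<exists>q \<in> U. gd_less \<delta> q p)}"

definition gen_dim_fun :: "('b, 'm) ring_scheme \<Rightarrow> ('b set \<Rightarrow> nat) \<Rightarrow> bool" where
  "gen_dim_fun B \<delta> \<longleftrightarrow> (\<forall>J. ideal J B \<longrightarrow> finite (gd_minimal \<delta> (V_set B J)))"

definition gen_dim :: "('b, 'm) ring_scheme \<Rightarrow> enat" where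
  "gen_dim B = (INF \<delta> \<in> {\<delta>. gen_dim_fun B \<delta>}. (SUP p \<in> Spec B. enat (\<delta> p)))"

end

theory Submission
  imports Defs
begin

text \<open>The primes of \<open>B = A\<^bsub>1+sA\<^esub>\<close> are the primes \<open>P\<close> of \<open>A\<close> missing \<open>1 + sA\<close>. Put
  \<open>\<delta>(p) = dim A/P\<close> (the coheight of \<open>P\<close>) if \<open>s \<in> P\<close> and \<open>\<delta>(p) = dim A/P - 1\<close> otherwise. Since \<open>s\<close> is a
  non-zero-divisor, every prime containing \<open>s\<close> contains a prime avoiding \<open>s\<close>, so
  \<open>dim A/P \<le> d - 1\<close> when \<open>s \<in> P\<close>; hence \<open>\<delta> \<le> d - 1\<close>. If \<open>s \<notin> P\<close>, then \<open>P + sA\<close> is proper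
  because \<open>P\<close> misses \<open>1 + sA\<close>, so \<open>dim A/P \<ge> 1\<close>. Thus \<open>\<delta>\<close> strictly decreases along
  inclusions of primes on the same side of \<open>V(s)\<close>, and a \<open>\<ll>\<close>-minimal prime over an ideal
  \<open>J\<close> of \<open>B\<close> contracts to a minimal prime of \<open>A\<close> over \<open>J \<inter> A\<close> or over \<open>(J \<inter> A) + sA\<close>.
  A Noetherian ring has only finitely many of these.\<close>

section \<open>Prime ideals of a Noetherian ring\<close>

lemma ideal_zero_closed: "ideal I R \<Longrightarrow> \<zero>\<^bsub>R\<^esub> \<in> I"
  by (rule additive_subgroup.zero_closed[OF ideal.axioms(1)])

lemma ideal_add_closed: "ideal I R \<Longrightarrow> x \<in> I \<Longrightarrow> y \<in> I \<Longrightarrow> x \<oplus>\<^bsub>R\<^esub> y \<in> I"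
  by (rule additive_subgroup.a_closed[OF ideal.axioms(1)])

lemma ideal_a_inv_closed: "ideal I R \<Longrightarrow> x \<in> I \<Longrightarrow> \<ominus>\<^bsub>R\<^esub> x \<in> I"
  by (rule additive_subgroup.a_inv_closed[OF ideal.axioms(1)])

lemma primeideal_imp_ideal: "primeideal P R \<Longrightarrow> ideal P R"
  by (rule primeideal.axioms(1))

lemma primeideal_one_notin: "primeideal P R \<Longrightarrow> \<one>\<^bsub>R\<^esub> \<notin> P"
  using ideal.one_imp_carrier[OF primeideal_imp_ideal] primeideal.I_notcarr by metis

lemma (in cring) ideal_sum_principal:
  assumes I: "ideal I R" and a: "a \<in> carrier R"
  shows "ideal (I <+>\<^bsub>R\<^esub> PIdl a) R"
    and "I \<subseteq> I <+>\<^bsub>R\<^esub> PIdl a"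
    and "a \<in> I <+>\<^bsub>R\<^esub> PIdl a"
    and "x \<in> I <+>\<^bsub>R\<^esub> PIdl a \<Longrightarrow> \<exists>i\<in>I. \<exists>r\<in>carrier R. x = i \<oplus> r \<otimes> a"
proof -
  show "ideal (I <+>\<^bsub>R\<^esub> PIdl a) R" by (rule add_ideals[OF I cgenideal_ideal[OF a]])
  have mem: "i \<oplus> r \<otimes> a \<in> I <+>\<^bsub>R\<^esub> PIdl a" if "i \<in> I" "r \<in> carrier R" for i r
    using that unfolding set_add_def' cgenideal_def by blast
  show "I \<subseteq> I <+>\<^bsub>R\<^esub> PIdl a"
  proof
    fix x assume x: "x \<in> I"
    then have "x = x \<oplus> \<zero> \<otimes> a" using ideal.Icarr[OF I] a by simp
    then show "x \<in> I <+>\<^bsub>R\<^esub> PIdl a" using mem[OF x, of \<zero>] by simp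
  qed
  have "a = \<zero> \<oplus> \<one> \<otimes> a" using a by simp
  then show "a \<in> I <+>\<^bsub>R\<^esub> PIdl a" using mem[OF ideal_zero_closed[OF I], of \<one>] by simp
  show "x \<in> I <+>\<^bsub>R\<^esub> PIdl a \<Longrightarrow> \<exists>i\<in>I. \<exists>r\<in>carrier R. x = i \<oplus> r \<otimes> a"
    unfolding set_add_def' cgenideal_def by blast
qed

lemma (in cring) ideal_sum_principal_least:
  assumes I: "ideal I R" and a: "a \<in> carrier R"
    and J: "ideal J R" "I \<subseteq> J" "a \<in> J"
  shows "I <+>\<^bsub>R\<^esub> PIdl a \<subseteq> J"
proof
  fix x assume "x \<in> I <+>\<^bsub>R\<^esub> PIdl a"
  then obtain i r where "i \<in> I" "r \<in> carrier R" "x = i \<oplus> r \<otimes> a"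
    using ideal_sum_principal(4)[OF I a] by blast
  then show "x \<in> J"
    using ideal_add_closed[OF J(1)] ideal.I_l_closed[OF J(1) J(3)] J(2) by blast
qed

locale noetherian_cring = cring R + noetherian_ring R for R (structure)

lemma (in noetherian_cring) ideal_family_has_maximal:
  assumes "\<F> \<subseteq> {I. ideal I R}" "\<F> \<noteq> {}"
  obtains M where "M \<in> \<F>" "\<And>K. K \<in> \<F> \<Longrightarrow> M \<subseteq> K \<Longrightarrow> K = M"
proof -
  have "\<exists>M\<in>\<F>. \<forall>K\<in>\<F>. M \<subseteq> K \<longrightarrow> K = M"
  proof (rule Zorn_Lemma2, intro ballI)
    fix C assume C: "C \<in> chains \<F>"
    show "\<exists>U\<in>\<F>. \<forall>K\<in>C. K \<subseteq> U"
    proof (cases "C = {}")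
      case True
      then show ?thesis using assms(2) by auto
    next
      case False
      have "subset.chain {I. ideal I R} C"
        using C assms(1) unfolding chains_alt_def subset.chain_def by blast
      then have "\<Union>C \<in> C" using ideal_chain_is_trivial False by blast
      then show ?thesis using C unfolding chains_def by auto
    qed
  qed
  then show thesis using that by blast
qed

definition finite_prime_base :: "('a, 'm) ring_scheme \<Rightarrow> 'a set \<Rightarrow> bool" where
  "finite_prime_base R I \<longleftrightarrow> (\<exists>F. finite F \<and> (\<forall>Q\<in>F. primeideal Q R \<and> I \<subseteq> Q) \<and>
      (\<forall>P. primeideal P R \<and> I \<subseteq> P \<longrightarrow> (\<exists>Q\<in>F. Q \<subseteq> P)))"

text \<open>Noetherian induction: a maximal ideal \<open>M\<close> without a finite prime base is neither
  the unit ideal nor prime, and if \<open>a b \<in> M\<close> with \<open>a, b \<notin> M\<close>, then the bases of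
  \<open>M + aR\<close> and \<open>M + bR\<close> together form one for \<open>M\<close>.\<close>
lemma (in noetherian_cring) finite_prime_base:
  assumes "ideal I R"
  shows "finite_prime_base R I"
proof (rule ccontr)
  assume "\<not> finite_prime_base R I"
  then have "{K. ideal K R \<and> \<not> finite_prime_base R K} \<noteq> {}" using assms by blast
  then obtain M where "M \<in> {K. ideal K R \<and> \<not> finite_prime_base R K}"
    and M_max: "\<And>K. K \<in> {K. ideal K R \<and> \<not> finite_prime_base R K} \<Longrightarrow> M \<subseteq> K \<Longrightarrow> K = M"
    by (rule ideal_family_has_maximal[rotated]) auto
  then have M: "ideal M R" "\<not> finite_prime_base R M" by auto
  have base_of_sum: "finite_prime_base R (M <+>\<^bsub>R\<^esub> PIdl a)" if "a \<in> carrier R" "a \<notin> M" for a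
  proof (rule ccontr)
    assume "\<not> finite_prime_base R (M <+>\<^bsub>R\<^esub> PIdl a)"
    then have "M <+>\<^bsub>R\<^esub> PIdl a = M"
      using M_max ideal_sum_principal(1,2)[OF M(1) that(1)] by blast
    then show False using ideal_sum_principal(3)[OF M(1) that(1)] that(2) by simp
  qed
  have "M \<noteq> carrier R"
  proof
    assume "M = carrier R"
    then have "\<not> (primeideal P R \<and> M \<subseteq> P)" for P
      using primeideal_one_notin by blast
    then have "finite_prime_base R M"
      unfolding finite_prime_base_def by (intro exI[of _ "{}"]) simp
    then show False using M(2) by blast
  qed
  moreover have "\<not> primeideal M R"
  proof
    assume "primeideal M R"
    then have "finite_prime_base R M"
      unfolding finite_prime_base_def by (intro exI[of _ "{M}"]) auto
    then show False using M(2) by blast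
  qed
  ultimately have "\<not> (\<forall>a b. a \<in> carrier R \<longrightarrow> b \<in> carrier R \<longrightarrow> a \<otimes> b \<in> M \<longrightarrow> a \<in> M \<or> b \<in> M)"
    using primeidealI[OF M(1) is_cring] by metis
  then obtain a b where ab: "a \<in> carrier R" "b \<in> carrier R" "a \<otimes> b \<in> M" "a \<notin> M" "b \<notin> M"
    by blast
  obtain F1 where F1: "finite F1" "\<forall>Q\<in>F1. primeideal Q R \<and> M <+>\<^bsub>R\<^esub> PIdl a \<subseteq> Q"
      "\<forall>P. primeideal P R \<and> M <+>\<^bsub>R\<^esub> PIdl a \<subseteq> P \<longrightarrow> (\<exists>Q\<in>F1. Q \<subseteq> P)"
    using base_of_sum[OF ab(1,4)] unfolding finite_prime_base_def by blast
  obtain F2 where F2: "finite F2" "\<forall>Q\<in>F2. primeideal Q R \<and> M <+>\<^bsub>R\<^esub> PIdl b \<subseteq> Q"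
      "\<forall>P. primeideal P R \<and> M <+>\<^bsub>R\<^esub> PIdl b \<subseteq> P \<longrightarrow> (\<exists>Q\<in>F2. Q \<subseteq> P)"
    using base_of_sum[OF ab(2,5)] unfolding finite_prime_base_def by blast
  have "\<exists>Q\<in>F1 \<union> F2. Q \<subseteq> P" if P: "primeideal P R" "M \<subseteq> P" for P
  proof -
    have "a \<in> P \<or> b \<in> P" using primeideal.I_prime[OF P(1) ab(1,2)] ab(3) P(2) by blast
    then show ?thesis
    proof
      assume "a \<in> P"
      then have "M <+>\<^bsub>R\<^esub> PIdl a \<subseteq> P"
        by (rule ideal_sum_principal_least[OF M(1) ab(1) primeideal_imp_ideal[OF P(1)] P(2)])
      then show ?thesis using F1(3) P(1) by blast
    next
      assume "b \<in> P"
      then have "M <+>\<^bsub>R\<^esub> PIdl b \<subseteq> P"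
        by (rule ideal_sum_principal_least[OF M(1) ab(2) primeideal_imp_ideal[OF P(1)] P(2)])
      then show ?thesis using F2(3) P(1) by blast
    qed
  qed
  moreover have "\<forall>Q\<in>F1 \<union> F2. primeideal Q R \<and> M \<subseteq> Q"
    using F1(2) F2(2) ideal_sum_principal(2)[OF M(1) ab(1)] ideal_sum_principal(2)[OF M(1) ab(2)]
    by blast
  ultimately have "finite_prime_base R M"
    unfolding finite_prime_base_def using F1(1) F2(1) by (intro exI[of _ "F1 \<union> F2"]) blast
  then show False using M(2) by blast
qed

definition minimal_primes :: "('a, 'm) ring_scheme \<Rightarrow> 'a set \<Rightarrow> 'a set set" where
  "minimal_primes R K = {P. primeideal P R \<and> K \<subseteq> P \<and>
      (\<forall>Q. primeideal Q R \<and> K \<subseteq> Q \<and> Q \<subseteq> P \<longrightarrow> Q = P)}"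

lemma (in noetherian_cring) finite_minimal_primes:
  assumes K: "K \<subseteq> carrier R"
  shows "finite (minimal_primes R K)"
proof -
  obtain F where F: "finite F" "\<forall>Q\<in>F. primeideal Q R \<and> Idl K \<subseteq> Q"
      "\<forall>P. primeideal P R \<and> Idl K \<subseteq> P \<longrightarrow> (\<exists>Q\<in>F. Q \<subseteq> P)"
    using finite_prime_base[OF genideal_ideal[OF K]] unfolding finite_prime_base_def by blast
  have "minimal_primes R K \<subseteq> F"
  proof
    fix P assume P: "P \<in> minimal_primes R K"
    then have Pp: "primeideal P R" and "K \<subseteq> P" unfolding minimal_primes_def by auto
    then have "Idl K \<subseteq> P" using genideal_minimal primeideal_imp_ideal by blast
    then obtain Q where Q: "Q \<in> F" "Q \<subseteq> P" using F(3) Pp by blast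
    have "primeideal Q R" "K \<subseteq> Q" using F(2) Q(1) genideal_self[OF K] by auto
    then have "Q = P" using P Q(2) unfolding minimal_primes_def by blast
    then show "P \<in> F" using Q(1) by simp
  qed
  then show ?thesis using F(1) finite_subset by blast
qed

text \<open>Maximal among ideals containing \<open>I\<close> and avoiding \<open>T\<close>, an ideal \<open>M\<close> is prime: for
  \<open>a, b \<notin> M\<close> both \<open>M + aR\<close> and \<open>M + bR\<close> meet \<open>T\<close>, so the product of the two elements
  of \<open>T\<close> lies in \<open>M\<close>.\<close>
lemma (in noetherian_cring) primeideal_disjoint_from_multiplicative:
  assumes I: "ideal I R" and T: "T \<subseteq> carrier R" "\<one> \<in> T"
    "\<And>x y. x \<in> T \<Longrightarrow> y \<in> T \<Longrightarrow> x \<otimes> y \<in> T" and disj: "I \<inter> T = {}"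
  obtains P where "primeideal P R" "I \<subseteq> P" "P \<inter> T = {}"
proof -
  have "{J. ideal J R \<and> I \<subseteq> J \<and> J \<inter> T = {}} \<noteq> {}" using I disj by blast
  then obtain M where "M \<in> {J. ideal J R \<and> I \<subseteq> J \<and> J \<inter> T = {}}"
    and M_max: "\<And>K. K \<in> {J. ideal J R \<and> I \<subseteq> J \<and> J \<inter> T = {}} \<Longrightarrow> M \<subseteq> K \<Longrightarrow> K = M"
    by (rule ideal_family_has_maximal[rotated]) auto
  then have M: "ideal M R" "I \<subseteq> M" "M \<inter> T = {}" by auto
  have meets_T: "\<exists>t\<in>T. \<exists>i\<in>M. \<exists>r\<in>carrier R. t = i \<oplus> r \<otimes> a"
    if a: "a \<in> carrier R" "a \<notin> M" for a
  proof (rule ccontr)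
    assume "\<not> ?thesis"
    then have "(M <+>\<^bsub>R\<^esub> PIdl a) \<inter> T = {}" using ideal_sum_principal(4)[OF M(1) a(1)] by blast
    then have "M <+>\<^bsub>R\<^esub> PIdl a = M"
      using M_max ideal_sum_principal(1,2)[OF M(1) a(1)] M(2) by blast
    then show False using ideal_sum_principal(3)[OF M(1) a(1)] a(2) by simp
  qed
  have "primeideal M R"
  proof (rule primeidealI[OF M(1) is_cring])
    show "carrier R \<noteq> M" using M(3) T(2) by blast
  next
    fix a b assume ab: "a \<in> carrier R" "b \<in> carrier R" "a \<otimes> b \<in> M"
    show "a \<in> M \<or> b \<in> M"
    proof (rule ccontr)
      assume "\<not> (a \<in> M \<or> b \<in> M)"
      then obtain t1 i1 r1 t2 i2 r2 where
        t1: "t1 \<in> T" "i1 \<in> M" "r1 \<in> carrier R" "t1 = i1 \<oplus> r1 \<otimes> a" and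
        t2: "t2 \<in> T" "i2 \<in> M" "r2 \<in> carrier R" "t2 = i2 \<oplus> r2 \<otimes> b"
        using meets_T ab(1,2) by meson
      have i: "i1 \<in> carrier R" "i2 \<in> carrier R" using t1(2) t2(2) ideal.Icarr[OF M(1)] by auto
      have "t1 \<otimes> t2 = i1 \<otimes> (i2 \<oplus> r2 \<otimes> b) \<oplus> (r1 \<otimes> a \<otimes> i2 \<oplus> (r1 \<otimes> r2) \<otimes> (a \<otimes> b))"
        unfolding t1(4) t2(4) using i t1(3) t2(3) ab(1,2) by algebra
      also have "\<dots> \<in> M"
      proof (intro ideal_add_closed[OF M(1)])
        show "i1 \<otimes> (i2 \<oplus> r2 \<otimes> b) \<in> M"
          using ideal.I_r_closed[OF M(1) t1(2)] i t2(3) ab(2) by simp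
        show "r1 \<otimes> a \<otimes> i2 \<in> M" using ideal.I_l_closed[OF M(1) t2(2)] t1(3) ab(1) by simp
        show "(r1 \<otimes> r2) \<otimes> (a \<otimes> b) \<in> M" using ideal.I_l_closed[OF M(1) ab(3)] t1(3) t2(3) by simp
      qed
      finally show False using M(3) T(3)[OF t1(1) t2(1)] by blast
    qed
  qed
  then show thesis using that M(2,3) by blast
qed

text \<open>Apply the previous lemma to \<open>{0}\<close> and the multiplicative set \<open>(R - P) s\<^sup>\<nat>\<close>,
  which avoids \<open>0\<close> because \<open>s\<close> is a non-zero-divisor.\<close>
lemma (in noetherian_cring) non_zero_divisor_avoids_prime_below:
  assumes nzd: "non_zero_divisor R s" and P: "primeideal P R"
  obtains Q where "primeideal Q R" "Q \<subseteq> P" "s \<notin> Q"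
proof -
  have s: "s \<in> carrier R" and s_cancel: "\<And>a. a \<in> carrier R \<Longrightarrow> s \<otimes> a = \<zero> \<Longrightarrow> a = \<zero>"
    using nzd unfolding non_zero_divisor_def by auto
  define T where "T = {t \<otimes> s [^] (n::nat) | t n. t \<in> carrier R - P}"
  have one_notin: "\<one> \<notin> P" by (rule primeideal_one_notin[OF P])
  have pow_mem: "t \<otimes> s [^] (n::nat) \<in> T" if "t \<in> carrier R" "t \<notin> P" for t n
    unfolding T_def using that by blast
  have T_carrier: "T \<subseteq> carrier R" unfolding T_def using s by auto
  have one_T: "\<one> \<in> T" using pow_mem[OF one_closed one_notin, of 0] by simp
  have T_mult: "x \<otimes> y \<in> T" if xT: "x \<in> T" and yT: "y \<in> T" for x y
  proof -
    obtain t n where t: "t \<in> carrier R" "t \<notin> P" "x = t \<otimes> s [^] (n::nat)"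
      using xT unfolding T_def by blast
    obtain t' m where t': "t' \<in> carrier R" "t' \<notin> P" "y = t' \<otimes> s [^] (m::nat)"
      using yT unfolding T_def by blast
    have pow: "s [^] n \<in> carrier R" "s [^] m \<in> carrier R" using s by auto
    have "x \<otimes> y = (t \<otimes> t') \<otimes> (s [^] n \<otimes> s [^] m)"
      unfolding t(3) t'(3) using pow t(1) t'(1) by algebra
    also have "s [^] n \<otimes> s [^] m = s [^] (n + m)" using nat_pow_mult s by blast
    finally have xy: "x \<otimes> y = (t \<otimes> t') \<otimes> s [^] (n + m)" .
    have "t \<otimes> t' \<notin> P" using primeideal.I_prime[OF P t(1) t'(1)] t(2) t'(2) by blast
    then show ?thesis unfolding xy using pow_mem t(1) t'(1) by blast
  qed
  have pow_cancel: "t \<otimes> s [^] (n::nat) = \<zero> \<Longrightarrow> t = \<zero>" if t: "t \<in> carrier R" for t n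
  proof (induction n)
    case 0
    then show ?case using t by simp
  next
    case (Suc n)
    have pow: "s [^] n \<in> carrier R" using s by simp
    have "s \<otimes> (t \<otimes> s [^] n) = t \<otimes> s [^] Suc n" using pow s t by (simp add: m_ac)
    then have "s \<otimes> (t \<otimes> s [^] n) = \<zero>" using Suc.prems by simp
    then show ?case using Suc.IH s_cancel pow t by simp
  qed
  have "\<zero> \<notin> T"
  proof
    assume "\<zero> \<in> T"
    then obtain t n where "t \<in> carrier R" "t \<notin> P" "t \<otimes> s [^] (n::nat) = \<zero>"
      unfolding T_def by auto
    then show False using pow_cancel ideal_zero_closed[OF primeideal_imp_ideal[OF P]] by blast
  qed
  then have "{\<zero>} \<inter> T = {}" by blast
  then obtain Q where Q: "primeideal Q R" "Q \<inter> T = {}"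
    using primeideal_disjoint_from_multiplicative[OF zeroideal T_carrier one_T T_mult] by blast
  have "Q \<subseteq> P"
  proof
    fix x assume x: "x \<in> Q"
    then have "x \<in> carrier R" using ideal.Icarr[OF primeideal_imp_ideal[OF Q(1)]] by blast
    then have "x \<notin> P \<Longrightarrow> x \<in> T" using pow_mem[of x 0] by auto
    then show "x \<in> P" using x Q(2) by blast
  qed
  moreover have "s \<in> T" using pow_mem[OF one_closed one_notin, of 1] s by simp
  then have "s \<notin> Q" using Q(2) by blast
  ultimately show thesis using that Q(1) by blast
qed

lemma (in cring) one_in_one_plus: "s \<in> carrier R \<Longrightarrow> \<one> \<in> one_plus R s"
  unfolding one_plus_def by (rule CollectI, rule exI[of _ \<zero>]) simp

lemma (in cring) one_plus_subset: "s \<in> carrier R \<Longrightarrow> one_plus R s \<subseteq> carrier R"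
  unfolding one_plus_def by auto

lemma (in cring) one_plus_mult_closed:
  assumes s: "s \<in> carrier R" and "u \<in> one_plus R s" "v \<in> one_plus R s"
  shows "u \<otimes> v \<in> one_plus R s"
proof -
  obtain a b where ab: "a \<in> carrier R" "u = \<one> \<oplus> s \<otimes> a" "b \<in> carrier R" "v = \<one> \<oplus> s \<otimes> b"
    using assms(2,3) unfolding one_plus_def by blast
  have "u \<otimes> v = \<one> \<oplus> s \<otimes> (a \<oplus> b \<oplus> s \<otimes> a \<otimes> b)"
    unfolding ab(2,4) using ab(1,3) s by algebra
  moreover have "a \<oplus> b \<oplus> s \<otimes> a \<otimes> b \<in> carrier R" using ab(1,3) s by simp
  ultimately show ?thesis unfolding one_plus_def by blast
qed

text \<open>If \<open>P\<close> misses \<open>1 + sR\<close>, then \<open>1 \<notin> P + sR\<close>, so some prime contains \<open>P + sR\<close>.\<close>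
lemma (in noetherian_cring) primeideal_above_containing:
  assumes P: "primeideal P R" "P \<inter> one_plus R s = {}" and s: "s \<in> carrier R"
  obtains Q where "primeideal Q R" "P \<subseteq> Q" "s \<in> Q"
proof -
  have Pi: "ideal P R" by (rule primeideal_imp_ideal[OF P(1)])
  have "\<one> \<notin> P <+>\<^bsub>R\<^esub> PIdl s"
  proof
    assume "\<one> \<in> P <+>\<^bsub>R\<^esub> PIdl s"
    then obtain i r where ir: "i \<in> P" "r \<in> carrier R" "\<one> = i \<oplus> r \<otimes> s"
      using ideal_sum_principal(4)[OF Pi s] by blast
    have "i \<in> carrier R" by (rule ideal.Icarr[OF Pi ir(1)])
    then have "i = \<one> \<oplus> s \<otimes> (\<ominus> r)" using ir(2,3) s by algebra
    then have "i \<in> one_plus R s" unfolding one_plus_def using ir(2) by blast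
    then show False using ir(1) P(2) by blast
  qed
  then obtain Q where "primeideal Q R" "P <+>\<^bsub>R\<^esub> PIdl s \<subseteq> Q"
    using primeideal_disjoint_from_multiplicative[OF ideal_sum_principal(1)[OF Pi s], of "{\<one>}"]
    by auto
  then show thesis using that ideal_sum_principal(2,3)[OF Pi s] by blast
qed

section \<open>Chains of prime ideals and coheight\<close>

definition prime_chain :: "('a, 'm) ring_scheme \<Rightarrow> nat \<Rightarrow> (nat \<Rightarrow> 'a set) \<Rightarrow> bool" where
  "prime_chain R n c \<longleftrightarrow> (\<forall>i\<le>n. c i \<in> Spec R) \<and> (\<forall>i<n. c i \<subset> c (Suc i))"

text \<open>Only meaningful when \<open>R\<close> has finite Krull dimension; otherwise \<open>Max\<close> may be applied
  to an infinite set.\<close>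
definition coheight :: "('a, 'm) ring_scheme \<Rightarrow> 'a set \<Rightarrow> nat" where
  "coheight R P = Max {n. \<exists>c. prime_chain R n c \<and> c 0 = P}"

lemma prime_chain_length_le:
  assumes "krull_dim R = enat d" "prime_chain R n c"
  shows "n \<le> d"
proof -
  have "enat n \<le> krull_dim R"
    unfolding krull_dim_def using assms(2) unfolding prime_chain_def by (intro SUP_upper) blast
  then show ?thesis using assms(1) by simp
qed

lemma prime_chain_Cons:
  assumes "prime_chain R n c" "Q \<in> Spec R" "Q \<subset> c 0"
  shows "prime_chain R (Suc n) (case_nat Q c)"
  unfolding prime_chain_def
proof (intro conjI allI impI)
  fix i assume "i \<le> Suc n"
  then show "case_nat Q c i \<in> Spec R" using assms(1,2) unfolding prime_chain_def by (cases i) auto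
next
  fix i assume "i < Suc n"
  then show "case_nat Q c i \<subset> case_nat Q c (Suc i)"
    using assms(1,3) unfolding prime_chain_def by (cases i) auto
qed

lemma finite_chain_lengths:
  assumes "krull_dim R = enat d"
  shows "finite {n. \<exists>c. prime_chain R n c \<and> c 0 = P}"
proof (rule finite_subset)
  show "{n. \<exists>c. prime_chain R n c \<and> c 0 = P} \<subseteq> {..d}"
    using prime_chain_length_le[OF assms] by blast
qed simp

lemma coheight_ge:
  assumes "krull_dim R = enat d" "prime_chain R n c"
  shows "n \<le> coheight R (c 0)"
  unfolding coheight_def using assms(2) by (intro Max_ge[OF finite_chain_lengths[OF assms(1)]]) blast

lemma coheight_chain:
  assumes "krull_dim R = enat d" "P \<in> Spec R"
  obtains c where "prime_chain R (coheight R P) c" "c 0 = P"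
proof -
  have "prime_chain R 0 (\<lambda>_. P)" unfolding prime_chain_def using assms(2) by simp
  then have "{n. \<exists>c. prime_chain R n c \<and> c 0 = P} \<noteq> {}" by blast
  then have "coheight R P \<in> {n. \<exists>c. prime_chain R n c \<and> c 0 = P}"
    unfolding coheight_def by (rule Max_in[OF finite_chain_lengths[OF assms(1)]])
  then show thesis using that by blast
qed

lemma coheight_le:
  assumes "krull_dim R = enat d" "P \<in> Spec R"
  shows "coheight R P \<le> d"
  using coheight_chain[OF assms] prime_chain_length_le[OF assms(1)] by metis

lemma coheight_strict_antimono:
  assumes kd: "krull_dim R = enat d" and "Q \<in> Spec R" "P \<in> Spec R" "Q \<subset> P"
  shows "coheight R P < coheight R Q"
proof -
  obtain c where c: "prime_chain R (coheight R P) c" "c 0 = P"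
    using coheight_chain[OF kd assms(3)] .
  have "prime_chain R (Suc (coheight R P)) (case_nat Q c)"
    using prime_chain_Cons[OF c(1) assms(2)] assms(4) c(2) by blast
  from coheight_ge[OF kd this] show ?thesis by simp
qed

section \<open>Prime ideals of a localization\<close>

locale multiplicative_localization = cring R for R (structure) +
  fixes S :: "'a set"
  assumes S_subset: "S \<subseteq> carrier R"
    and one_S: "\<one> \<in> S"
    and S_mult: "u \<in> S \<Longrightarrow> v \<in> S \<Longrightarrow> u \<otimes> v \<in> S"
begin

text \<open>The ring axioms of \<open>Loc\<close> are never established in general: the lemmas that need
  them assume them, and they are available whenever \<open>Loc\<close> has a prime ideal, since
  \<^const>\<open>primeideal\<close> includes \<^const>\<open>cring\<close>.\<close>

abbreviation frac :: "'a \<Rightarrow> 'a \<Rightarrow> ('a \<times> 'a) set" where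
  "frac a u \<equiv> loc_rel R S `` {(a, u)}"

abbreviation Loc :: "('a \<times> 'a) set ring" where
  "Loc \<equiv> localization R S"

lemma S_carrier: "u \<in> S \<Longrightarrow> u \<in> carrier R"
  using S_subset by blast

lemma loc_rel_iff: "((a, u), (b, v)) \<in> loc_rel R S \<longleftrightarrow> a \<in> carrier R \<and> u \<in> S \<and> b \<in> carrier R \<and> v \<in> S \<and>
   (\<exists>t\<in>S. t \<otimes> (a \<otimes> v \<ominus> b \<otimes> u) = \<zero>)"
  unfolding loc_rel_def by simp

lemma loc_rel_subset: "loc_rel R S \<subseteq> (carrier R \<times> S) \<times> (carrier R \<times> S)"
  unfolding loc_rel_def by auto

lemma equiv_loc_rel: "equiv (carrier R \<times> S) (loc_rel R S)"
proof (rule equivI[OF loc_rel_subset])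
  show "refl_on (carrier R \<times> S) (loc_rel R S)"
  proof (rule refl_onI)
    fix x assume "x \<in> carrier R \<times> S"
    then obtain a u where x: "x = (a, u)" "a \<in> carrier R" "u \<in> S" by blast
    have uc: "u \<in> carrier R" using S_carrier x(3) .
    have "\<one> \<otimes> (a \<otimes> u \<ominus> a \<otimes> u) = \<zero>" using x(2) uc by algebra
    then show "(x, x) \<in> loc_rel R S" unfolding x(1) loc_rel_iff using x(2,3) one_S by blast
  qed
  show "sym (loc_rel R S)"
  proof (rule symI)
    fix x y assume "(x, y) \<in> loc_rel R S"
    then obtain a u b v where xy: "x = (a, u)" "y = (b, v)" by (cases x, cases y) auto
    obtain t where h: "a \<in> carrier R" "u \<in> S" "b \<in> carrier R" "v \<in> S" "t \<in> S"
      "t \<otimes> (a \<otimes> v \<ominus> b \<otimes> u) = \<zero>"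
      using \<open>(x, y) \<in> loc_rel R S\<close> unfolding xy loc_rel_iff by blast
    have c: "u \<in> carrier R" "v \<in> carrier R" "t \<in> carrier R" using h S_carrier by auto
    have "t \<otimes> (b \<otimes> u \<ominus> a \<otimes> v) = \<ominus> (t \<otimes> (a \<otimes> v \<ominus> b \<otimes> u))"
      using c h(1,3) by algebra
    also have "\<dots> = \<zero>" using h(6) by simp
    finally show "(y, x) \<in> loc_rel R S" unfolding xy loc_rel_iff using h by blast
  qed
  show "trans (loc_rel R S)"
  proof (rule transI)
    fix x y z assume "(x, y) \<in> loc_rel R S" "(y, z) \<in> loc_rel R S"
    then obtain a u b v c w where xyz: "x = (a, u)" "y = (b, v)" "z = (c, w)"
      by (cases x, cases y, cases z) auto
    obtain t1 where h1: "a \<in> carrier R" "u \<in> S" "b \<in> carrier R" "v \<in> S" "t1 \<in> S"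
      "t1 \<otimes> (a \<otimes> v \<ominus> b \<otimes> u) = \<zero>"
      using \<open>(x, y) \<in> loc_rel R S\<close> unfolding xyz loc_rel_iff by blast
    obtain t2 where h2: "c \<in> carrier R" "w \<in> S" "t2 \<in> S"
      "t2 \<otimes> (b \<otimes> w \<ominus> c \<otimes> v) = \<zero>"
      using \<open>(y, z) \<in> loc_rel R S\<close> unfolding xyz loc_rel_iff by blast
    have carr: "u \<in> carrier R" "v \<in> carrier R" "w \<in> carrier R" "t1 \<in> carrier R" "t2 \<in> carrier R"
      using h1 h2 S_carrier by auto
    have tS: "t1 \<otimes> t2 \<otimes> v \<in> S" using S_mult h1(4,5) h2(3) by blast
    have "t1 \<otimes> t2 \<otimes> v \<otimes> (a \<otimes> w \<ominus> c \<otimes> u) =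
          t2 \<otimes> w \<otimes> (t1 \<otimes> (a \<otimes> v \<ominus> b \<otimes> u)) \<oplus> t1 \<otimes> u \<otimes> (t2 \<otimes> (b \<otimes> w \<ominus> c \<otimes> v))"
      using carr h1(1,3) h2(1) by algebra
    also have "\<dots> = \<zero>" using h1(6) h2(4) carr by simp
    finally show "(x, z) \<in> loc_rel R S" unfolding xyz loc_rel_iff using h1 h2 tS by blast
  qed
qed

lemma frac_eq_iff:
  assumes "a \<in> carrier R" "u \<in> S" "b \<in> carrier R" "v \<in> S"
  shows "frac a u = frac b v \<longleftrightarrow> ((a, u), (b, v)) \<in> loc_rel R S"
proof -
  have "(a, u) \<in> carrier R \<times> S" "(b, v) \<in> carrier R \<times> S" using assms by auto
  then show ?thesis by (rule eq_equiv_class_iff[OF equiv_loc_rel])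
qed

lemma frac_eqI:
  assumes "a \<in> carrier R" "u \<in> S" "b \<in> carrier R" "v \<in> S" "a \<otimes> v \<ominus> b \<otimes> u = \<zero>"
  shows "frac a u = frac b v"
proof -
  have "a \<otimes> v \<ominus> b \<otimes> u \<in> carrier R" using assms(1-4) S_carrier by simp
  then have "\<one> \<otimes> (a \<otimes> v \<ominus> b \<otimes> u) = \<zero>" using assms(5) by simp
  then show ?thesis using frac_eq_iff[OF assms(1-4)] assms(1-4) one_S unfolding loc_rel_iff by blast
qed

lemma carrier_localization: "carrier Loc = (carrier R \<times> S) // (loc_rel R S)"
  unfolding localization_def by simp

lemma frac_closed: "a \<in> carrier R \<Longrightarrow> u \<in> S \<Longrightarrow> frac a u \<in> carrier Loc"
  unfolding carrier_localization by (rule quotientI) simp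

lemma localization_elem:
  assumes "x \<in> carrier Loc"
  shows "\<exists>a u. a \<in> carrier R \<and> u \<in> S \<and> x = frac a u"
proof -
  obtain p where p: "p \<in> carrier R \<times> S" "x = loc_rel R S `` {p}"
    using assms unfolding carrier_localization by (rule quotientE)
  obtain a u where "p = (a, u)" by (cases p)
  then show ?thesis using p by blast
qed

lemma some_loc_rel_rep:
  assumes "a \<in> carrier R" "u \<in> S"
  shows "((a, u), (SOME p. p \<in> frac a u)) \<in> loc_rel R S"
proof -
  have "(a, u) \<in> frac a u"
    using equiv_class_self[OF equiv_loc_rel] assms by blast
  then have "(SOME p. p \<in> frac a u) \<in> frac a u" by (rule someI)
  then show ?thesis by blast
qed

lemma loc_rel_mult_compat:
  assumes "((a, u), (a', u')) \<in> loc_rel R S" "((b, v), (b', v')) \<in> loc_rel R S"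
  shows "((a \<otimes> b, u \<otimes> v), (a' \<otimes> b', u' \<otimes> v')) \<in> loc_rel R S"
proof -
  obtain t1 where h1: "a \<in> carrier R" "u \<in> S" "a' \<in> carrier R" "u' \<in> S" "t1 \<in> S"
      "t1 \<otimes> (a \<otimes> u' \<ominus> a' \<otimes> u) = \<zero>" using assms(1) unfolding loc_rel_iff by blast
  obtain t2 where h2: "b \<in> carrier R" "v \<in> S" "b' \<in> carrier R" "v' \<in> S" "t2 \<in> S"
      "t2 \<otimes> (b \<otimes> v' \<ominus> b' \<otimes> v) = \<zero>" using assms(2) unfolding loc_rel_iff by blast
  have carr: "u \<in> carrier R" "v \<in> carrier R" "u' \<in> carrier R" "v' \<in> carrier R" "t1 \<in> carrier R" "t2 \<in> carrier R"
    using h1 h2 S_carrier by auto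
  have "t1 \<otimes> t2 \<otimes> ((a \<otimes> b) \<otimes> (u' \<otimes> v') \<ominus> (a' \<otimes> b') \<otimes> (u \<otimes> v)) =
        t2 \<otimes> b \<otimes> v' \<otimes> (t1 \<otimes> (a \<otimes> u' \<ominus> a' \<otimes> u)) \<oplus> t1 \<otimes> a' \<otimes> u \<otimes> (t2 \<otimes> (b \<otimes> v' \<ominus> b' \<otimes> v))"
    using carr h1(1,3) h2(1,3) by algebra
  also have "\<dots> = \<zero>" using h1 h2 carr by simp
  finally show ?thesis unfolding loc_rel_iff using h1 h2 S_mult by auto
qed

lemma loc_rel_add_compat:
  assumes "((a, u), (a', u')) \<in> loc_rel R S" "((b, v), (b', v')) \<in> loc_rel R S"
  shows "((a \<otimes> v \<oplus> b \<otimes> u, u \<otimes> v), (a' \<otimes> v' \<oplus> b' \<otimes> u', u' \<otimes> v')) \<in> loc_rel R S"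
proof -
  obtain t1 where h1: "a \<in> carrier R" "u \<in> S" "a' \<in> carrier R" "u' \<in> S" "t1 \<in> S"
      "t1 \<otimes> (a \<otimes> u' \<ominus> a' \<otimes> u) = \<zero>" using assms(1) unfolding loc_rel_iff by blast
  obtain t2 where h2: "b \<in> carrier R" "v \<in> S" "b' \<in> carrier R" "v' \<in> S" "t2 \<in> S"
      "t2 \<otimes> (b \<otimes> v' \<ominus> b' \<otimes> v) = \<zero>" using assms(2) unfolding loc_rel_iff by blast
  have carr: "u \<in> carrier R" "v \<in> carrier R" "u' \<in> carrier R" "v' \<in> carrier R" "t1 \<in> carrier R" "t2 \<in> carrier R"
    using h1 h2 S_carrier by auto
  have "t1 \<otimes> t2 \<otimes> ((a \<otimes> v \<oplus> b \<otimes> u) \<otimes> (u' \<otimes> v') \<ominus> (a' \<otimes> v' \<oplus> b' \<otimes> u') \<otimes> (u \<otimes> v)) =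
        t2 \<otimes> v \<otimes> v' \<otimes> (t1 \<otimes> (a \<otimes> u' \<ominus> a' \<otimes> u)) \<oplus> t1 \<otimes> u \<otimes> u' \<otimes> (t2 \<otimes> (b \<otimes> v' \<ominus> b' \<otimes> v))"
    using carr h1(1,3) h2(1,3) by algebra
  also have "\<dots> = \<zero>" using h1 h2 carr by simp
  finally show ?thesis unfolding loc_rel_iff using h1 h2 S_mult carr by auto
qed

lemma frac_mult:
  assumes "a \<in> carrier R" "u \<in> S" "b \<in> carrier R" "v \<in> S"
  shows "frac a u \<otimes>\<^bsub>Loc\<^esub> frac b v = frac (a \<otimes> b) (u \<otimes> v)"
proof -
  define p where "p = (SOME p. p \<in> frac a u)"
  define q where "q = (SOME q. q \<in> frac b v)"
  have p: "((a, u), (fst p, snd p)) \<in> loc_rel R S" using some_loc_rel_rep[OF assms(1,2)] unfolding p_def by simp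
  have q: "((b, v), (fst q, snd q)) \<in> loc_rel R S" using some_loc_rel_rep[OF assms(3,4)] unfolding q_def by simp
  have "((a \<otimes> b, u \<otimes> v), (fst p \<otimes> fst q, snd p \<otimes> snd q)) \<in> loc_rel R S" by (rule loc_rel_mult_compat[OF p q])
  then have "frac (fst p \<otimes> fst q) (snd p \<otimes> snd q) = frac (a \<otimes> b) (u \<otimes> v)"
    using equiv_class_eq[OF equiv_loc_rel] by metis
  then show ?thesis unfolding localization_def loc_mult_def Let_def p_def q_def by simp
qed

lemma frac_add:
  assumes "a \<in> carrier R" "u \<in> S" "b \<in> carrier R" "v \<in> S"
  shows "frac a u \<oplus>\<^bsub>Loc\<^esub> frac b v = frac (a \<otimes> v \<oplus> b \<otimes> u) (u \<otimes> v)"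
proof -
  define p where "p = (SOME p. p \<in> frac a u)"
  define q where "q = (SOME q. q \<in> frac b v)"
  have p: "((a, u), (fst p, snd p)) \<in> loc_rel R S" using some_loc_rel_rep[OF assms(1,2)] unfolding p_def by simp
  have q: "((b, v), (fst q, snd q)) \<in> loc_rel R S" using some_loc_rel_rep[OF assms(3,4)] unfolding q_def by simp
  have "((a \<otimes> v \<oplus> b \<otimes> u, u \<otimes> v), (fst p \<otimes> snd q \<oplus> fst q \<otimes> snd p, snd p \<otimes> snd q)) \<in> loc_rel R S"
    by (rule loc_rel_add_compat[OF p q])
  then have "frac (fst p \<otimes> snd q \<oplus> fst q \<otimes> snd p) (snd p \<otimes> snd q) = frac (a \<otimes> v \<oplus> b \<otimes> u) (u \<otimes> v)"
    using equiv_class_eq[OF equiv_loc_rel] by metis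
  then show ?thesis unfolding localization_def loc_add_def Let_def p_def q_def by simp
qed

lemma localization_zero: "\<zero>\<^bsub>Loc\<^esub> = frac \<zero> \<one>"
  unfolding localization_def by simp

lemma localization_one: "\<one>\<^bsub>Loc\<^esub> = frac \<one> \<one>"
  unfolding localization_def by simp


abbreviation extension where "extension P \<equiv> {x. \<exists>a\<in>P. \<exists>u\<in>S. x = frac a u}"
abbreviation contraction where "contraction p \<equiv> {a \<in> carrier R. frac a \<one> \<in> p}"

lemma frac_mult_inverse:
  assumes "u \<in> S"
  shows "frac u \<one> \<otimes>\<^bsub>Loc\<^esub> frac \<one> u = \<one>\<^bsub>Loc\<^esub>"
proof -
  have uc: "u \<in> carrier R" using S_carrier assms .
  have "frac u \<one> \<otimes>\<^bsub>Loc\<^esub> frac \<one> u = frac (u \<otimes> \<one>) (\<one> \<otimes> u)"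
    by (rule frac_mult[OF uc one_S one_closed assms])
  also have "\<dots> = frac \<one> \<one>"
  proof (rule frac_eqI)
    show "u \<otimes> \<one> \<in> carrier R" "\<one> \<otimes> u \<in> S" "\<one> \<in> carrier R" "\<one> \<in> S"
      using uc assms one_S by auto
    show "u \<otimes> \<one> \<otimes> \<one> \<ominus> \<one> \<otimes> (\<one> \<otimes> u) = \<zero>" using uc by algebra
  qed
  finally show ?thesis unfolding localization_one .
qed

lemma frac_eq_mult:
  assumes "a \<in> carrier R" "u \<in> S"
  shows "frac a u = frac a \<one> \<otimes>\<^bsub>Loc\<^esub> frac \<one> u"
proof -
  have uc: "u \<in> carrier R" using S_carrier assms(2) .
  have "frac a \<one> \<otimes>\<^bsub>Loc\<^esub> frac \<one> u = frac (a \<otimes> \<one>) (\<one> \<otimes> u)"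
    by (rule frac_mult[OF assms(1) one_S one_closed assms(2)])
  also have "a \<otimes> \<one> = a" using assms(1) by simp
  also have "\<one> \<otimes> u = u" using uc by simp
  finally show ?thesis by simp
qed

lemma frac_clear_denominator:
  assumes "a \<in> carrier R" "u \<in> S"
  shows "frac a \<one> = frac a u \<otimes>\<^bsub>Loc\<^esub> frac u \<one>"
proof -
  have uc: "u \<in> carrier R" using S_carrier assms(2) .
  have "frac a u \<otimes>\<^bsub>Loc\<^esub> frac u \<one> = frac (a \<otimes> u) (u \<otimes> \<one>)"
    by (rule frac_mult[OF assms(1,2) uc one_S])
  also have "\<dots> = frac a \<one>"
  proof (rule frac_eqI)
    show "a \<otimes> u \<in> carrier R" "u \<otimes> \<one> \<in> S" "a \<in> carrier R" "\<one> \<in> S"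
      using uc assms one_S by auto
    show "a \<otimes> u \<otimes> \<one> \<ominus> a \<otimes> (u \<otimes> \<one>) = \<zero>" using uc assms(1) by algebra
  qed
  finally show ?thesis by simp
qed

lemma frac_one_add:
  assumes "a \<in> carrier R" "b \<in> carrier R"
  shows "frac (a \<oplus> b) \<one> = frac a \<one> \<oplus>\<^bsub>Loc\<^esub> frac b \<one>"
proof -
  have "frac a \<one> \<oplus>\<^bsub>Loc\<^esub> frac b \<one> = frac (a \<otimes> \<one> \<oplus> b \<otimes> \<one>) (\<one> \<otimes> \<one>)"
    by (rule frac_add[OF assms(1) one_S assms(2) one_S])
  also have "a \<otimes> \<one> \<oplus> b \<otimes> \<one> = a \<oplus> b" using assms by simp
  also have "\<one> \<otimes> \<one> = \<one>" by simp
  finally show ?thesis by simp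
qed

lemma frac_one_mult:
  assumes "a \<in> carrier R" "b \<in> carrier R"
  shows "frac (a \<otimes> b) \<one> = frac a \<one> \<otimes>\<^bsub>Loc\<^esub> frac b \<one>"
proof -
  have "frac a \<one> \<otimes>\<^bsub>Loc\<^esub> frac b \<one> = frac (a \<otimes> b) (\<one> \<otimes> \<one>)"
    by (rule frac_mult[OF assms(1) one_S assms(2) one_S])
  also have "\<one> \<otimes> \<one> = \<one>" by simp
  finally show ?thesis by simp
qed

lemma frac_a_inv:
  assumes rL: "ring Loc" and "a \<in> carrier R" "u \<in> S"
  shows "\<ominus>\<^bsub>Loc\<^esub> frac a u = frac (\<ominus> a) u"
proof -
  have uc: "u \<in> carrier R" using S_carrier assms(3) .
  have "frac (\<ominus> a) u \<oplus>\<^bsub>Loc\<^esub> frac a u = frac (\<ominus> a \<otimes> u \<oplus> a \<otimes> u) (u \<otimes> u)"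
    by (rule frac_add[OF _ assms(3) assms(2) assms(3)]) (use assms(2) in simp)
  also have "\<dots> = frac \<zero> \<one>"
  proof (rule frac_eqI)
    show "\<ominus> a \<otimes> u \<oplus> a \<otimes> u \<in> carrier R" "u \<otimes> u \<in> S" "\<zero> \<in> carrier R" "\<one> \<in> S"
      using uc assms(2,3) one_S S_mult by auto
    show "(\<ominus> a \<otimes> u \<oplus> a \<otimes> u) \<otimes> \<one> \<ominus> \<zero> \<otimes> (u \<otimes> u) = \<zero>" using uc assms(2) by algebra
  qed
  finally have e: "frac (\<ominus> a) u \<oplus>\<^bsub>Loc\<^esub> frac a u = \<zero>\<^bsub>Loc\<^esub>" unfolding localization_zero .
  have c1: "frac a u \<in> carrier Loc" by (rule frac_closed[OF assms(2,3)])
  have c2: "frac (\<ominus> a) u \<in> carrier Loc" by (rule frac_closed[OF _ assms(3)]) (use assms(2) in simp)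
  show ?thesis
    by (rule abelian_group.minus_equality[OF ring.is_abelian_group[OF rL] e c1 c2])
qed

lemma frac_mem_extension_iff:
  assumes P: "primeideal P R" "P \<inter> S = {}" and a: "a \<in> carrier R" "u \<in> S"
  shows "frac a u \<in> extension P \<longleftrightarrow> a \<in> P"
proof
  assume "a \<in> P" then show "frac a u \<in> extension P" using a(2) by blast
next
  assume "frac a u \<in> extension P"
  then obtain b v where bv: "b \<in> P" "v \<in> S" "frac a u = frac b v" by blast
  have Pi: "ideal P R" by (rule primeideal_imp_ideal[OF P(1)])
  have bc: "b \<in> carrier R" by (rule ideal.Icarr[OF Pi bv(1)])
  have uc: "u \<in> carrier R" "v \<in> carrier R" using S_carrier a(2) bv(2) by auto
  have "((a, u), (b, v)) \<in> loc_rel R S" using frac_eq_iff[OF a bc bv(2)] bv(3) by simp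
  then obtain t where t: "t \<in> S" "t \<otimes> (a \<otimes> v \<ominus> b \<otimes> u) = \<zero>" unfolding loc_rel_iff by blast
  have tc: "t \<in> carrier R" using S_carrier t(1) .
  have "t \<otimes> (a \<otimes> v \<ominus> b \<otimes> u) \<in> P" using t(2) ideal_zero_closed[OF Pi] by simp
  moreover have "t \<notin> P" using t(1) P(2) by blast
  moreover have dc: "a \<otimes> v \<ominus> b \<otimes> u \<in> carrier R" using a(1) uc bc by simp
  ultimately have d: "a \<otimes> v \<ominus> b \<otimes> u \<in> P"
    using primeideal.I_prime[OF P(1) tc dc] by blast
  have bu: "b \<otimes> u \<in> P" by (rule ideal.I_r_closed[OF Pi bv(1) uc(1)])
  have "a \<otimes> v = (a \<otimes> v \<ominus> b \<otimes> u) \<oplus> b \<otimes> u" using a(1) uc bc by algebra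
  also have "\<dots> \<in> P" by (rule ideal_add_closed[OF Pi d bu])
  finally have "a \<otimes> v \<in> P" .
  moreover have "v \<notin> P" using bv(2) P(2) by blast
  ultimately show "a \<in> P" using primeideal.I_prime[OF P(1) a(1) uc(2)] by blast
qed

lemma extension_ideal:
  assumes cL: "cring Loc" and P: "ideal P R"
  shows "ideal (extension P) Loc"
proof -
  have rL: "ring Loc" using cL cring.axioms(1) by blast
  have P_carrier: "P \<subseteq> carrier R" using ideal.Icarr[OF P] by blast
  have sub: "extension P \<subseteq> carrier Loc" using frac_closed P_carrier by blast
  have add: "x \<oplus>\<^bsub>Loc\<^esub> y \<in> extension P" if xP: "x \<in> extension P" and yP: "y \<in> extension P" for x y
  proof -
    obtain a u where au: "a \<in> P" "u \<in> S" "x = frac a u" using xP by blast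
    obtain b v where bv: "b \<in> P" "v \<in> S" "y = frac b v" using yP by blast
    have c: "a \<in> carrier R" "b \<in> carrier R" "u \<in> carrier R" "v \<in> carrier R"
      using au bv P_carrier S_carrier by auto
    have "x \<oplus>\<^bsub>Loc\<^esub> y = frac (a \<otimes> v \<oplus> b \<otimes> u) (u \<otimes> v)"
      unfolding au(3) bv(3) by (rule frac_add[OF c(1) au(2) c(2) bv(2)])
    moreover have "a \<otimes> v \<oplus> b \<otimes> u \<in> P"
      by (rule ideal_add_closed[OF P ideal.I_r_closed[OF P au(1) c(4)] ideal.I_r_closed[OF P bv(1) c(3)]])
    ultimately show ?thesis using S_mult[OF au(2) bv(2)] by blast
  qed
  have zero: "\<zero>\<^bsub>Loc\<^esub> \<in> extension P"
    unfolding localization_zero using ideal_zero_closed[OF P] one_S by blast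
  have a_inv: "\<ominus>\<^bsub>Loc\<^esub> x \<in> extension P" if xP: "x \<in> extension P" for x
  proof -
    obtain a u where au: "a \<in> P" "u \<in> S" "x = frac a u" using xP by blast
    have "\<ominus>\<^bsub>Loc\<^esub> x = frac (\<ominus> a) u"
      unfolding au(3) using frac_a_inv[OF rL _ au(2)] au(1) P_carrier by blast
    then show ?thesis using ideal_a_inv_closed[OF P au(1)] au(2) by blast
  qed
  have l_closed: "x \<otimes>\<^bsub>Loc\<^esub> y \<in> extension P" if yP: "y \<in> extension P" and xL: "x \<in> carrier Loc" for x y
  proof -
    obtain a u where au: "a \<in> P" "u \<in> S" "y = frac a u" using yP by blast
    obtain r w where rw: "r \<in> carrier R" "w \<in> S" "x = frac r w" using localization_elem[OF xL] by blast
    have "x \<otimes>\<^bsub>Loc\<^esub> y = frac (r \<otimes> a) (w \<otimes> u)"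
      unfolding au(3) rw(3) using frac_mult[OF rw(1,2) _ au(2)] au(1) P_carrier by blast
    then show ?thesis using ideal.I_l_closed[OF P au(1) rw(1)] S_mult[OF rw(2) au(2)] by blast
  qed
  have "subgroup (extension P) (add_monoid Loc)"
    using sub add zero a_inv unfolding a_inv_def by (intro subgroup.intro) auto
  moreover have "y \<otimes>\<^bsub>Loc\<^esub> x \<in> extension P" if "y \<in> extension P" "x \<in> carrier Loc" for x y
  proof -
    have "y \<otimes>\<^bsub>Loc\<^esub> x = x \<otimes>\<^bsub>Loc\<^esub> y" using cring.cring_simprules(14)[OF cL] that sub by blast
    then show ?thesis using l_closed[OF that] by simp
  qed
  ultimately show ?thesis using l_closed by (intro idealI[OF rL]) auto
qed

lemma extension_primeideal:
  assumes cL: "cring Loc" and P: "primeideal P R" "P \<inter> S = {}"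
  shows "primeideal (extension P) Loc"
proof (rule primeidealI[OF extension_ideal[OF cL primeideal_imp_ideal[OF P(1)]] cL])
  have "frac \<one> \<one> \<notin> extension P"
    using frac_mem_extension_iff[OF P one_closed one_S] primeideal_one_notin[OF P(1)] by simp
  then show "carrier Loc \<noteq> extension P" using frac_closed[OF one_closed one_S] by blast
next
  fix x y assume xy: "x \<in> carrier Loc" "y \<in> carrier Loc" "x \<otimes>\<^bsub>Loc\<^esub> y \<in> extension P"
  obtain a u where au: "a \<in> carrier R" "u \<in> S" "x = frac a u" using localization_elem[OF xy(1)] by blast
  obtain b v where bv: "b \<in> carrier R" "v \<in> S" "y = frac b v" using localization_elem[OF xy(2)] by blast
  have "x \<otimes>\<^bsub>Loc\<^esub> y = frac (a \<otimes> b) (u \<otimes> v)"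
    unfolding au(3) bv(3) by (rule frac_mult[OF au(1,2) bv(1,2)])
  then have "a \<otimes> b \<in> P"
    using xy(3) frac_mem_extension_iff[OF P _ S_mult[OF au(2) bv(2)], of "a \<otimes> b"] au(1) bv(1) by simp
  then have "a \<in> P \<or> b \<in> P" by (rule primeideal.I_prime[OF P(1) au(1) bv(1)])
  then show "x \<in> extension P \<or> y \<in> extension P" using au bv by blast
qed

lemma contraction_ideal:
  assumes rL: "ring Loc" and p: "ideal p Loc"
  shows "ideal (contraction p) R"
proof -
  have frac_closed1: "frac a \<one> \<in> carrier Loc" if "a \<in> carrier R" for a
    by (rule frac_closed[OF that one_S])
  have "subgroup (contraction p) (add_monoid R)"
  proof (rule subgroup.intro)
    show "contraction p \<subseteq> carrier (add_monoid R)" by auto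
    show "x \<otimes>\<^bsub>add_monoid R\<^esub> y \<in> contraction p" if "x \<in> contraction p" "y \<in> contraction p" for x y
      using frac_one_add[of x y] ideal_add_closed[OF p] that by auto
    show "\<one>\<^bsub>add_monoid R\<^esub> \<in> contraction p"
      using ideal_zero_closed[OF p] unfolding localization_zero by simp
    show "inv\<^bsub>add_monoid R\<^esub> x \<in> contraction p" if "x \<in> contraction p" for x
    proof -
      have x: "x \<in> carrier R" using that by blast
      have "frac (\<ominus> x) \<one> = \<ominus>\<^bsub>Loc\<^esub> frac x \<one>" using frac_a_inv[OF rL x one_S] by simp
      then show ?thesis using ideal_a_inv_closed[OF p] that x unfolding a_inv_def[symmetric] by auto
    qed
  qed
  moreover have l_closed: "x \<otimes> a \<in> contraction p" if "a \<in> contraction p" "x \<in> carrier R" for a x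
    using frac_one_mult[OF that(2), of a] ideal.I_l_closed[OF p _ frac_closed1[OF that(2)]] that by auto
  moreover have "a \<otimes> x \<in> contraction p" if "a \<in> contraction p" "x \<in> carrier R" for a x
    using l_closed[OF that] m_comm[OF _ that(2), of a] that by auto
  ultimately show ?thesis by (intro idealI[OF ring_axioms]) auto
qed

lemma contraction_primeideal:
  assumes p: "primeideal p Loc"
  shows "primeideal (contraction p) R" and "contraction p \<inter> S = {}"
proof -
  have p_ideal: "ideal p Loc" by (rule primeideal_imp_ideal[OF p])
  have one_notin: "frac \<one> \<one> \<notin> p" using primeideal_one_notin[OF p] unfolding localization_one .
  have rL: "ring Loc" using primeideal.axioms(2)[OF p] cring.axioms(1) by blast
  show "primeideal (contraction p) R"
  proof (rule primeidealI[OF contraction_ideal[OF rL p_ideal] is_cring])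
    show "carrier R \<noteq> contraction p" using one_notin by auto
  next
    fix a b assume ab: "a \<in> carrier R" "b \<in> carrier R" "a \<otimes> b \<in> contraction p"
    have "frac a \<one> \<otimes>\<^bsub>Loc\<^esub> frac b \<one> \<in> p" using frac_one_mult[OF ab(1,2)] ab(3) by simp
    then have "frac a \<one> \<in> p \<or> frac b \<one> \<in> p"
      using primeideal.I_prime[OF p frac_closed[OF ab(1) one_S] frac_closed[OF ab(2) one_S]] by blast
    then show "a \<in> contraction p \<or> b \<in> contraction p" using ab by blast
  qed
  show "contraction p \<inter> S = {}"
  proof (rule ccontr)
    assume "contraction p \<inter> S \<noteq> {}"
    then obtain u where u: "u \<in> S" "frac u \<one> \<in> p" by blast
    have "frac u \<one> \<otimes>\<^bsub>Loc\<^esub> frac \<one> u \<in> p"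
      by (rule ideal.I_r_closed[OF p_ideal u(2) frac_closed[OF one_closed u(1)]])
    then show False using frac_mult_inverse[OF u(1)] one_notin unfolding localization_one by simp
  qed
qed

lemma extension_contraction:
  assumes J: "ideal J Loc"
  shows "extension (contraction J) = J"
proof
  show "J \<subseteq> extension (contraction J)"
  proof
    fix x assume x: "x \<in> J"
    obtain a u where au: "a \<in> carrier R" "u \<in> S" "x = frac a u"
      using localization_elem[OF ideal.Icarr[OF J x]] by blast
    have "frac a \<one> = x \<otimes>\<^bsub>Loc\<^esub> frac u \<one>"
      unfolding au(3) by (rule frac_clear_denominator[OF au(1,2)])
    also have "\<dots> \<in> J" by (rule ideal.I_r_closed[OF J x frac_closed[OF S_carrier[OF au(2)] one_S]])
    finally show "x \<in> extension (contraction J)" using au by blast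
  qed
  show "extension (contraction J) \<subseteq> J"
  proof
    fix x assume "x \<in> extension (contraction J)"
    then obtain a u where au: "a \<in> carrier R" "frac a \<one> \<in> J" "u \<in> S" "x = frac a u" by blast
    have "x = frac a \<one> \<otimes>\<^bsub>Loc\<^esub> frac \<one> u" unfolding au(4) by (rule frac_eq_mult[OF au(1,3)])
    also have "\<dots> \<in> J" by (rule ideal.I_r_closed[OF J au(2) frac_closed[OF one_closed au(3)]])
    finally show "x \<in> J" .
  qed
qed

lemma inj_on_contraction: "inj_on contraction {J. ideal J Loc}"
  by (rule inj_on_inverseI[of _ extension]) (use extension_contraction in blast)

lemma contraction_extension:
  assumes P: "primeideal P R" "P \<inter> S = {}"
  shows "contraction (extension P) = P"
  using frac_mem_extension_iff[OF P _ one_S] ideal.Icarr[OF primeideal_imp_ideal[OF P(1)]] by blast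

lemma primeideal_lift:
  assumes J: "ideal J Loc" and p: "primeideal p Loc"
    and Q: "primeideal Q R" "contraction J \<subseteq> Q" "Q \<subset> contraction p"
  shows "extension Q \<in> V_set Loc J" and "extension Q \<subset> p" and "contraction (extension Q) = Q"
proof -
  have Q_disj: "Q \<inter> S = {}" using Q(3) contraction_primeideal(2)[OF p] by blast
  show Q_eq: "contraction (extension Q) = Q" by (rule contraction_extension[OF Q(1) Q_disj])
  have "primeideal (extension Q) Loc"
    by (rule extension_primeideal[OF primeideal.axioms(2)[OF p] Q(1) Q_disj])
  moreover have "J \<subseteq> extension Q"
  proof -
    have "J = extension (contraction J)" by (rule extension_contraction[OF J, symmetric])
    also have "\<dots> \<subseteq> extension Q" using Q(2) by blast
    finally show ?thesis .
  qed
  ultimately show "extension Q \<in> V_set Loc J" unfolding V_set_def Spec_def by blast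
  have "extension Q \<subseteq> extension (contraction p)" using Q(3) by blast
  also have "\<dots> = p" by (rule extension_contraction[OF primeideal_imp_ideal[OF p]])
  finally show "extension Q \<subset> p" using Q_eq Q(3) by blast
qed

end

section \<open>A generalized dimension function on the localization at \<open>1 + sR\<close>\<close>

locale one_plus_localization = noetherian_cring R for R (structure) +
  fixes s :: 'a and d :: nat
  assumes s_non_zero_divisor: "non_zero_divisor R s"
    and krull_dim_eq: "krull_dim R = enat d"
begin

lemma s_carrier: "s \<in> carrier R"
  using s_non_zero_divisor unfolding non_zero_divisor_def by blast

sublocale multiplicative_localization R "one_plus R s"
  using s_carrier one_in_one_plus one_plus_subset one_plus_mult_closed
  by unfold_locales auto

definition \<delta> :: "('a \<times> 'a) set set \<Rightarrow> nat" where
  "\<delta> p = (if s \<in> contraction p then coheight R (contraction p) else coheight R (contraction p) - 1)"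

lemma \<delta>_if_s_in: "s \<in> contraction p \<Longrightarrow> \<delta> p = coheight R (contraction p)"
  unfolding \<delta>_def by (rule if_P)

lemma \<delta>_if_s_notin: "s \<notin> contraction p \<Longrightarrow> \<delta> p = coheight R (contraction p) - 1"
  unfolding \<delta>_def by (rule if_not_P)

lemma coheight_pos_if_s_notin:
  assumes P: "primeideal P R" "P \<inter> one_plus R s = {}" and "s \<notin> P"
  shows "0 < coheight R P"
proof -
  obtain Q where Q: "primeideal Q R" "P \<subseteq> Q" "s \<in> Q"
    using primeideal_above_containing[OF P s_carrier] .
  have "coheight R Q < coheight R P"
    using Q assms(3) P(1) by (intro coheight_strict_antimono[OF krull_dim_eq]) (auto simp: Spec_def)
  then show ?thesis by simp
qed

lemma coheight_lt_if_s_in: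
  assumes P: "primeideal P R" and "s \<in> P"
  shows "coheight R P < d"
proof -
  obtain Q where Q: "primeideal Q R" "Q \<subseteq> P" "s \<notin> Q"
    using non_zero_divisor_avoids_prime_below[OF s_non_zero_divisor P] .
  have "coheight R P < coheight R Q"
    using Q assms(2) P by (intro coheight_strict_antimono[OF krull_dim_eq]) (auto simp: Spec_def)
  also have "coheight R Q \<le> d" using coheight_le[OF krull_dim_eq] Q(1) by (simp add: Spec_def)
  finally show ?thesis .
qed

lemma \<delta>_le:
  assumes "p \<in> Spec Loc"
  shows "\<delta> p \<le> d - 1"
proof -
  have P: "primeideal (contraction p) R"
    using contraction_primeideal(1) assms unfolding Spec_def by blast
  show ?thesis
  proof (cases "s \<in> contraction p")
    case True
    then show ?thesis using coheight_lt_if_s_in[OF P] \<delta>_if_s_in by simp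
  next
    case False
    have "coheight R (contraction p) \<le> d"
      using coheight_le[OF krull_dim_eq] P unfolding Spec_def by blast
    then show ?thesis using \<delta>_if_s_notin[OF False] by simp
  qed
qed

lemma \<delta>_strict_antimono:
  assumes p: "primeideal p Loc" and q: "primeideal q Loc" and "q \<subset> p"
    and s_iff: "s \<in> contraction q \<longleftrightarrow> s \<in> contraction p"
  shows "\<delta> p < \<delta> q"
proof -
  have "contraction q \<noteq> contraction p"
  proof
    assume "contraction q = contraction p"
    then have "extension (contraction q) = extension (contraction p)" by simp
    then show False
      using extension_contraction[OF primeideal_imp_ideal[OF p]]
        extension_contraction[OF primeideal_imp_ideal[OF q]] assms(3) by simp
  qed
  moreover have "contraction q \<subseteq> contraction p" using assms(3) by blast
  ultimately have "contraction q \<subset> contraction p" by blast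
  then have lt: "coheight R (contraction p) < coheight R (contraction q)"
    using contraction_primeideal(1)[OF p] contraction_primeideal(1)[OF q]
    by (intro coheight_strict_antimono[OF krull_dim_eq]) (auto simp: Spec_def)
  show ?thesis
  proof (cases "s \<in> contraction p")
    case True
    then show ?thesis using lt s_iff \<delta>_if_s_in by simp
  next
    case False
    have "0 < coheight R (contraction p)"
      by (rule coheight_pos_if_s_notin[OF contraction_primeideal[OF p] False])
    moreover have "s \<notin> contraction q" using False s_iff by blast
    ultimately show ?thesis using lt \<delta>_if_s_notin[OF False] \<delta>_if_s_notin[of q] by simp
  qed
qed

text \<open>Below the contraction of a \<open>\<delta>\<close>-minimal prime over \<open>J\<close> there is no prime over
  the contraction of \<open>J\<close> on the same side of \<open>V(s)\<close>: its extension would be smaller in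
  \<open>\<ll>\<close>.\<close>
lemma no_prime_below_contraction_of_minimal:
  assumes J: "ideal J Loc" and p: "p \<in> gd_minimal \<delta> (V_set Loc J)"
    and Q: "primeideal Q R" "contraction J \<subseteq> Q" "Q \<subset> contraction p"
    and s_iff: "s \<in> Q \<longleftrightarrow> s \<in> contraction p"
  shows False
proof -
  have pp: "primeideal p Loc" using p unfolding gd_minimal_def V_set_def Spec_def by blast
  define q where "q = extension Q"
  have q: "q \<in> V_set Loc J" "q \<subset> p" "contraction q = Q"
    unfolding q_def using primeideal_lift[OF J pp Q] by auto
  have "\<delta> p < \<delta> q"
    using q s_iff pp unfolding V_set_def Spec_def by (intro \<delta>_strict_antimono) auto
  then have "gd_less \<delta> q p" unfolding gd_less_def using q(2) by blast
  then show False using p q(1) unfolding gd_minimal_def by blast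
qed

lemma contraction_of_minimal_in_minimal_primes:
  assumes J: "ideal J Loc" and p: "p \<in> gd_minimal \<delta> (V_set Loc J)"
  shows "contraction p \<in> minimal_primes R (contraction J) \<union> minimal_primes R (insert s (contraction J))"
proof -
  have pp: "primeideal p Loc" and "J \<subseteq> p"
    using p unfolding gd_minimal_def V_set_def Spec_def by auto
  then have P: "primeideal (contraction p) R" "contraction J \<subseteq> contraction p"
    using contraction_primeideal(1) by auto
  have no_below: "Q = contraction p"
    if "primeideal Q R" "contraction J \<subseteq> Q" "Q \<subseteq> contraction p" "s \<in> Q \<longleftrightarrow> s \<in> contraction p" for Q
    using no_prime_below_contraction_of_minimal[OF J p] that by blast
  show ?thesis
  proof (cases "s \<in> contraction p")
    case True
    then have "contraction p \<in> minimal_primes R (insert s (contraction J))"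
      using P no_below unfolding minimal_primes_def by blast
    then show ?thesis by blast
  next
    case False
    then have "contraction p \<in> minimal_primes R (contraction J)"
      using P no_below unfolding minimal_primes_def by blast
    then show ?thesis by blast
  qed
qed

lemma gen_dim_fun_\<delta>: "gen_dim_fun Loc \<delta>"
  unfolding gen_dim_fun_def
proof (intro allI impI)
  fix J assume J: "ideal J Loc"
  have "inj_on contraction (gd_minimal \<delta> (V_set Loc J))"
    by (rule inj_on_subset[OF inj_on_contraction])
      (auto simp: gd_minimal_def V_set_def Spec_def dest: primeideal_imp_ideal)
  moreover have "finite (contraction ` gd_minimal \<delta> (V_set Loc J))"
  proof (rule finite_subset)
    show "contraction ` gd_minimal \<delta> (V_set Loc J) \<subseteq>
        minimal_primes R (contraction J) \<union> minimal_primes R (insert s (contraction J))"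
      using contraction_of_minimal_in_minimal_primes[OF J] by blast
    show "finite (minimal_primes R (contraction J) \<union> minimal_primes R (insert s (contraction J)))"
      using finite_minimal_primes s_carrier by auto
  qed
  ultimately show "finite (gd_minimal \<delta> (V_set Loc J))" by (rule finite_imageD[rotated])
qed

lemma gen_dim_le: "gen_dim Loc \<le> enat (d - 1)"
proof -
  have "gen_dim Loc \<le> (SUP p\<in>Spec Loc. enat (\<delta> p))"
    unfolding gen_dim_def using gen_dim_fun_\<delta> by (intro INF_lower) simp
  also have "\<dots> \<le> enat (d - 1)" using \<delta>_le by (intro SUP_least) simp
  finally show ?thesis .
qed

end

theorem lemma3p2:
  fixes A :: "('a, 'm) ring_scheme" and s :: 'a and d :: nat
  assumes "cring A" and "noetherian_ring A"
    and "krull_dim A = enat d" and "d \<ge> 1"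
    and "non_zero_divisor A s"
  shows "gen_dim (localization A (one_plus A s)) \<le> enat (d - 1)"
proof -
  interpret one_plus_localization A s d
    using assms by (intro one_plus_localization.intro noetherian_cring.intro one_plus_localization_axioms.intro)
  show ?thesis by (rule gen_dim_le)
qed

end
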